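(* For every parameter $\rho\in\{\mathrm{sn},\underline{\mathrm{lcs}},\overline{\mathrm{scs}},\overline{\mathrm{lcs}}\}$ and every $N>0$, there exist graphs $H\subsetneq G$ ($H$ a proper subgraph of $G$) with $\chi(H)=\chi(G)$ such that $\rho(H)>N\rho(G)$.
   Context: All graphs are finite and simple. For a graph $G=(V,E)$ with $k=\chi(G)$, a proper $k$-colouring is a map $c:V\to[k]$ with $c(u)\neq c(v)$ for every edge $uv$. A set $S\subseteq V$ is a determining set for $(G,c)$ if there is no proper $k$-colouring $c'\neq c$ with $c'(s)=c(s)$ for all $s\in S$; a critical set is an inclusion-minimal determining set. $\mathrm{scs}(G,c)$ and $\mathrm{lcs}(G,c)$ are the sizes of a smallest resp. largest critical set for $(G,c)$. Over all proper $\chi(G)$-colourings $c$: $\mathrm{sn}(G)=\min_c\mathrm{scs}(G,c)$, $\underline{\mathrm{lcs}}(G)=\min_c\mathrm{lcs}(G,c)$, $\overline{\mathrm{scs}}(G)=\max_c\mathrm{scs}(G,c)$, $\overline{\mathrm{lcs}}(G)=\max_c\mathrm{lcs}(G,c)$. *)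

theory Defs
  imports Complex_Main
begin

type_synonym 'a graph = "'a set \<times> 'a set set"

definition verts :: "'a graph \<Rightarrow> 'a set" where "verts G = fst G"
definition edges :: "'a graph \<Rightarrow> 'a set set" where "edges G = snd G"

definition simple_graph :: "'a graph \<Rightarrow> bool" where
  "simple_graph G \<longleftrightarrow> finite (verts G) \<and>
     (\<forall>e\<in>edges G. \<exists>u v. e = {u, v} \<and> u \<noteq> v \<and> u \<in> verts G \<and> v \<in> verts G)"

definition subgraph :: "'a graph \<Rightarrow> 'a graph \<Rightarrow> bool" where
  "subgraph H G \<longleftrightarrow> verts H \<subseteq> verts G \<and> edges H \<subseteq> edges G"

definition proper_subgraph :: "'a graph \<Rightarrow> 'a graph \<Rightarrow> bool" where
  "proper_subgraph H G \<longleftrightarrow> subgraph H G \<and> H \<noteq> G"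

text \<open>Proper k-colouring with colours [k] = {1..k}; only values on V matter.\<close>
definition proper_colouring :: "'a graph \<Rightarrow> nat \<Rightarrow> ('a \<Rightarrow> nat) \<Rightarrow> bool" where
  "proper_colouring G k c \<longleftrightarrow> (\<forall>v\<in>verts G. c v \<in> {1..k}) \<and>
     (\<forall>u v. {u, v} \<in> edges G \<longrightarrow> c u \<noteq> c v)"

definition chi :: "'a graph \<Rightarrow> nat" where
  "chi G = (LEAST k. \<exists>c. proper_colouring G k c)"

text \<open>Two colourings are equal as maps V \<rightarrow> [k] iff they agree on V.\<close>
definition determining :: "'a graph \<Rightarrow> ('a \<Rightarrow> nat) \<Rightarrow> 'a set \<Rightarrow> bool" where
  "determining G c S \<longleftrightarrow> S \<subseteq> verts G \<and>
     \<not> (\<exists>c'. proper_colouring G (chi G) c' \<and> (\<exists>v\<in>verts G. c' v \<noteq> c v) \<and>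
            (\<forall>s\<in>S. c' s = c s))"

definition critical :: "'a graph \<Rightarrow> ('a \<Rightarrow> nat) \<Rightarrow> 'a set \<Rightarrow> bool" where
  "critical G c S \<longleftrightarrow> determining G c S \<and> (\<forall>T. T \<subset> S \<longrightarrow> \<not> determining G c T)"

definition scs :: "'a graph \<Rightarrow> ('a \<Rightarrow> nat) \<Rightarrow> nat" where
  "scs G c = Min (card ` {S. critical G c S})"

definition lcs :: "'a graph \<Rightarrow> ('a \<Rightarrow> nat) \<Rightarrow> nat" where
  "lcs G c = Max (card ` {S. critical G c S})"

definition sn :: "'a graph \<Rightarrow> nat" where
  "sn G = Min {scs G c | c. proper_colouring G (chi G) c}"

definition lcs_min :: "'a graph \<Rightarrow> nat" where
  "lcs_min G = Min {lcs G c | c. proper_colouring G (chi G) c}"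

definition scs_max :: "'a graph \<Rightarrow> nat" where
  "scs_max G = Max {scs G c | c. proper_colouring G (chi G) c}"

definition lcs_max :: "'a graph \<Rightarrow> nat" where
  "lcs_max G = Max {lcs G c | c. proper_colouring G (chi G) c}"

end

theory Submission
  imports Defs
begin

text \<open>If \<open>\<chi>(G) = 2\<close>, a proper 2-colouring alternates along edges and may be flipped on
  any single connected component. So a set of vertices is determining iff it meets every
  component, the critical sets are exactly the transversals of the components, and all four
  parameters equal the number of components. The star with \<open>n\<close> leaves is connected,
  whereas deleting all but one of its edges leaves \<open>n\<close> components and keeps \<open>\<chi> = 2\<close>.\<close>

definition adjacent :: "'a graph \<Rightarrow> 'a \<Rightarrow> 'a \<Rightarrow> bool" where
  "adjacent G u v \<longleftrightarrow> {u, v} \<in> edges G"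

definition component :: "'a graph \<Rightarrow> 'a \<Rightarrow> 'a set" where
  "component G v = {w. (adjacent G)\<^sup>*\<^sup>* v w}"

definition components :: "'a graph \<Rightarrow> 'a set set" where
  "components G = component G ` verts G"

lemma symp_adjacent: "symp (adjacent G)"
  by (auto intro: sympI simp: adjacent_def insert_commute)

lemma component_refl: "v \<in> component G v"
  by (simp add: component_def)

lemma component_sym: "w \<in> component G v \<Longrightarrow> v \<in> component G w"
  using sympD[OF symp_rtranclp[OF symp_adjacent]] by (simp add: component_def)

lemma component_eq:
  assumes "w \<in> component G v"
  shows "component G w = component G v"
proof -
  have "(adjacent G)\<^sup>*\<^sup>* v w" "(adjacent G)\<^sup>*\<^sup>* w v"
    using assms component_sym[OF assms] by (simp_all add: component_def)
  then show ?thesis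
    unfolding component_def by (blast intro: rtranclp_trans)
qed

lemma component_eq_iff: "component G v = component G w \<longleftrightarrow> w \<in> component G v"
  using component_eq component_refl by metis

lemma adjacent_in_verts:
  "simple_graph G \<Longrightarrow> adjacent G u v \<Longrightarrow> u \<in> verts G \<and> v \<in> verts G"
  by (fastforce simp: simple_graph_def adjacent_def doubleton_eq_iff)

lemma component_subset_verts:
  assumes "simple_graph G" "v \<in> verts G"
  shows "component G v \<subseteq> verts G"
proof
  fix w assume "w \<in> component G v"
  then have "(adjacent G)\<^sup>*\<^sup>* v w" by (simp add: component_def)
  then show "w \<in> verts G"
    by induction (use assms(2) adjacent_in_verts[OF assms(1)] in auto)
qed

lemma adjacent_component_iff:
  assumes "adjacent G x y"
  shows "x \<in> component G v \<longleftrightarrow> y \<in> component G v"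
proof -
  have "adjacent G y x" using assms symp_adjacent by (metis sympD)
  then show ?thesis
    using assms by (auto simp: component_def intro: rtranclp.rtrancl_into_rtrancl)
qed

lemma proper_2_colouring_adjacent:
  assumes "simple_graph G" "proper_colouring G 2 c" "adjacent G u v"
  shows "c v = 3 - c u"
proof -
  have "c u \<in> {1..2}" "c v \<in> {1..2}" "c u \<noteq> c v"
    using assms adjacent_in_verts[OF assms(1,3)] unfolding proper_colouring_def adjacent_def
    by auto
  then show ?thesis by auto
qed

lemma proper_2_colourings_agree_on_component:
  assumes "simple_graph G" "proper_colouring G 2 c" "proper_colouring G 2 c'"
    and "c' v = c v" "w \<in> component G v"
  shows "c' w = c w"
proof -
  have "(adjacent G)\<^sup>*\<^sup>* v w" using assms(5) by (simp add: component_def)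
  then show ?thesis
  proof induction
    case (step x y)
    then show ?case
      using proper_2_colouring_adjacent[OF assms(1,2) step(2)]
        proper_2_colouring_adjacent[OF assms(1,3) step(2)]
      by simp
  qed (use assms(4) in simp)
qed

lemma swap_colours_on_component:
  assumes G: "simple_graph G" and c: "proper_colouring G 2 c"
  shows "proper_colouring G 2 (\<lambda>w. if w \<in> component G v then 3 - c w else c w)"
  unfolding proper_colouring_def
proof (intro conjI allI ballI impI)
  fix w assume "w \<in> verts G"
  then show "(if w \<in> component G v then 3 - c w else c w) \<in> {1..2}"
    using c by (auto simp: proper_colouring_def)
next
  fix x y assume "{x, y} \<in> edges G"
  then have xy: "adjacent G x y" by (simp add: adjacent_def)
  then have "x \<in> verts G" using adjacent_in_verts[OF G] by blast
  then have "c x \<in> {1..2}" using c by (simp add: proper_colouring_def)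
  moreover have "c y = 3 - c x" using proper_2_colouring_adjacent[OF G c xy] .
  moreover have "3 - c x \<noteq> c x" using \<open>c x \<in> {1..2}\<close> by auto arith
  moreover have "x \<in> component G v \<longleftrightarrow> y \<in> component G v" using adjacent_component_iff[OF xy] .
  ultimately show "(if x \<in> component G v then 3 - c x else c x) \<noteq>
      (if y \<in> component G v then 3 - c y else c y)"
    by auto
qed

lemma chi_eq_2:
  assumes G: "simple_graph G" and c: "proper_colouring G 2 c" and e: "e \<in> edges G"
  shows "chi G = 2"
  unfolding chi_def
proof (rule Least_equality)
  show "\<exists>c. proper_colouring G 2 c" using c by blast
next
  fix k assume "\<exists>c. proper_colouring G k c"
  then obtain c' where c': "proper_colouring G k c'" by blast
  obtain u v where "e = {u, v}" "u \<noteq> v" "u \<in> verts G" "v \<in> verts G"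
    using G e by (auto simp: simple_graph_def)
  then have "c' u \<in> {1..k}" "c' v \<in> {1..k}" "c' u \<noteq> c' v"
    using c' e by (auto simp: proper_colouring_def)
  then show "2 \<le> k" by auto
qed

lemma determining_iff_meets_all_components:
  assumes G: "simple_graph G" and chi: "chi G = 2" and c: "proper_colouring G 2 c"
  shows "determining G c S \<longleftrightarrow> S \<subseteq> verts G \<and> component G ` S = components G"
proof
  assume det: "determining G c S"
  then have S: "S \<subseteq> verts G" by (simp add: determining_def)
  have "component G v \<in> component G ` S" if v: "v \<in> verts G" for v
  proof (rule ccontr)
    assume "component G v \<notin> component G ` S"
    then have disjoint: "s \<notin> component G v" if "s \<in> S" for s
      using that component_eq by (metis image_eqI)
    let ?c' = "\<lambda>w. if w \<in> component G v then 3 - c w else c w"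
    have "c v \<in> {1..2}" using c v by (simp add: proper_colouring_def)
    then have "3 - c v \<noteq> c v" by auto arith
    then have "?c' v \<noteq> c v" using component_refl[of v G] by simp
    moreover have "\<forall>s\<in>S. ?c' s = c s" using disjoint by simp
    moreover have "proper_colouring G (chi G) ?c'"
      using swap_colours_on_component[OF G c] chi by simp
    ultimately show False
      using det v unfolding determining_def by blast
  qed
  then show "S \<subseteq> verts G \<and> component G ` S = components G"
    using S by (auto simp: components_def)
next
  assume S: "S \<subseteq> verts G \<and> component G ` S = components G"
  have "c' v = c v" if c': "proper_colouring G 2 c'" and agree: "\<forall>s\<in>S. c' s = c s"
    and v: "v \<in> verts G" for c' v
  proof -
    have "component G v \<in> component G ` S"
      using S v by (simp add: components_def)
    then obtain s where "s \<in> S" "v \<in> component G s"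
      using component_eq_iff by (metis imageE)
    then show ?thesis
      using proper_2_colourings_agree_on_component[OF G c c'] agree by blast
  qed
  then show "determining G c S"
    using S unfolding determining_def chi by blast
qed

lemma card_critical_eq_card_components:
  assumes G: "simple_graph G" and chi: "chi G = 2" and c: "proper_colouring G 2 c"
    and crit: "critical G c S"
  shows "card S = card (components G)"
proof -
  note det_iff = determining_iff_meets_all_components[OF G chi c]
  have S: "S \<subseteq> verts G" "component G ` S = components G"
    using crit det_iff by (simp_all add: critical_def)
  have "inj_on (component G) S"
  proof (rule inj_onI, rule ccontr)
    fix s t assume st: "s \<in> S" "t \<in> S" "component G s = component G t" "s \<noteq> t"
    then have "component G ` (S - {t}) = component G ` S" by blast
    then have "determining G c (S - {t})" using S det_iff by auto
    moreover have "S - {t} \<subset> S" using st by blast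
    ultimately show False using crit by (simp add: critical_def)
  qed
  then show ?thesis using S(2) card_image by fastforce
qed

lemma critical_set_exists:
  assumes "finite (verts G)"
  shows "\<exists>S. critical G c S"
proof -
  have "determining G c (verts G)" by (auto simp: determining_def)
  then obtain S where S: "determining G c S"
    and least: "\<And>T. determining G c T \<Longrightarrow> card S \<le> card T"
    using ex_has_least_nat[where m = card] by metis
  have "finite S" using S assms finite_subset by (auto simp: determining_def)
  then have "\<not> determining G c T" if "T \<subset> S" for T
    using that least psubset_card_mono by (meson leD)
  then show ?thesis using S unfolding critical_def by blast
qed

lemma parameter_eq_if_critical_sets_have_card:
  assumes "finite (verts G)" and "proper_colouring G (chi G) c\<^sub>0"
    and card: "\<And>c S. proper_colouring G (chi G) c \<Longrightarrow> critical G c S \<Longrightarrow> card S = k"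
    and \<rho>: "\<rho> \<in> {sn, lcs_min, scs_max, lcs_max}"
  shows "\<rho> G = k"
proof -
  have "card ` {S. critical G c S} = {k}" if "proper_colouring G (chi G) c" for c
    using card[OF that] critical_set_exists[OF assms(1), of c] by auto
  then have "scs G c = k" "lcs G c = k" if "proper_colouring G (chi G) c" for c
    using that by (simp_all add: scs_def lcs_def)
  then have "{scs G c | c. proper_colouring G (chi G) c} = {k}"
    "{lcs G c | c. proper_colouring G (chi G) c} = {k}"
    using assms(2) by blast+
  then show ?thesis
    using \<rho> by (auto simp: sn_def lcs_min_def scs_max_def lcs_max_def)
qed

lemma bipartite_parameter_eq_card_components:
  assumes G: "simple_graph G" and c: "proper_colouring G 2 c" and e: "e \<in> edges G"
    and \<rho>: "\<rho> \<in> {sn, lcs_min, scs_max, lcs_max}"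
  shows "\<rho> G = card (components G)"
proof -
  have chi: "chi G = 2" using chi_eq_2[OF G c e] .
  show ?thesis
  proof (rule parameter_eq_if_critical_sets_have_card[OF _ _ _ \<rho>])
    show "finite (verts G)" using G by (simp add: simple_graph_def)
    show "proper_colouring G (chi G) c" using c chi by simp
  qed (use card_critical_eq_card_components[OF G chi] chi in simp)
qed

definition star :: "nat \<Rightarrow> nat graph" where
  "star n = ({0..n}, {{0, i} | i. i \<in> {1..n}})"

definition single_edge_graph :: "nat \<Rightarrow> nat graph" where
  "single_edge_graph n = ({0..n}, {{0, 1}})"

lemma verts_star [simp]: "verts (star n) = {0..n}"
  and edges_star: "edges (star n) = {{0, i} | i. i \<in> {1..n}}"
  by (simp_all add: star_def verts_def edges_def)

lemma verts_single_edge_graph [simp]: "verts (single_edge_graph n) = {0..n}"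
  and edges_single_edge_graph [simp]: "edges (single_edge_graph n) = {{0, 1}}"
  by (simp_all add: single_edge_graph_def verts_def edges_def)

lemma simple_graph_star: "simple_graph (star n)"
  by (auto simp: simple_graph_def edges_star)

lemma simple_graph_single_edge_graph: "n \<ge> 1 \<Longrightarrow> simple_graph (single_edge_graph n)"
  by (auto simp: simple_graph_def)

lemma proper_colouring_star: "proper_colouring (star n) 2 (\<lambda>v. if v = 0 then 1 else 2)"
  by (auto simp: proper_colouring_def edges_star doubleton_eq_iff)

lemma proper_colouring_single_edge_graph:
  "proper_colouring (single_edge_graph n) 2 (\<lambda>v. if v = 0 then 1 else 2)"
  by (auto simp: proper_colouring_def doubleton_eq_iff)

lemma proper_subgraph_single_edge_graph_star:
  assumes "n \<ge> 2"
  shows "proper_subgraph (single_edge_graph n) (star n)"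
proof -
  have "{0, 2} \<in> edges (star n) - edges (single_edge_graph n)"
    using assms by (auto simp: edges_star doubleton_eq_iff)
  then have "single_edge_graph n \<noteq> star n" by (metis Diff_cancel empty_iff)
  moreover have "edges (single_edge_graph n) \<subseteq> edges (star n)"
    using assms by (auto simp: edges_star)
  ultimately show ?thesis by (simp add: proper_subgraph_def subgraph_def)
qed

lemma components_star: "components (star n) = {{0..n}}"
proof -
  have "w \<in> component (star n) 0" if "w \<in> {0..n}" for w
    using that component_refl[of 0]
    by (cases "w = 0") (auto simp: component_def adjacent_def edges_star intro!: r_into_rtranclp exI[of _ w])
  then have "component (star n) v = {0..n}" if "v \<in> {0..n}" for v
    using that component_subset_verts[OF simple_graph_star, of v] component_eq
    by (metis subsetI subset_antisym verts_star)
  then show ?thesis by (auto simp: components_def)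
qed

lemma component_single_edge_graph:
  "component (single_edge_graph n) v = (if v \<le> 1 then {0, 1} else {v})"
proof -
  have adj: "adjacent (single_edge_graph n) x y \<longleftrightarrow> {x, y} = {0, 1}" for x y
    by (simp add: adjacent_def)
  have "w \<in> (if v \<le> 1 then {0, 1} else {v})" if "(adjacent (single_edge_graph n))\<^sup>*\<^sup>* v w" for w
    using that by induction (auto simp: adj doubleton_eq_iff)
  then have "component (single_edge_graph n) v \<subseteq> (if v \<le> 1 then {0, 1} else {v})"
    unfolding component_def by blast
  moreover have "(adjacent (single_edge_graph n))\<^sup>*\<^sup>* v w" if "v \<le> 1" "w \<le> 1" for w
    using that by (cases "v = w") (auto simp: adj le_Suc_eq doubleton_eq_iff)
  then have "(if v \<le> 1 then {0, 1} else {v}) \<subseteq> component (single_edge_graph n) v"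
    by (auto simp: component_def)
  ultimately show ?thesis by (rule subset_antisym)
qed

lemma card_components_single_edge_graph:
  assumes "n \<ge> 1"
  shows "card (components (single_edge_graph n)) = n"
proof -
  have "components (single_edge_graph n) = insert {0, 1} ((\<lambda>i. {i}) ` {2..n})"
    using assms by (auto simp: components_def component_single_edge_graph image_iff)
  moreover have "{0, 1} \<notin> (\<lambda>i. {i}) ` {2..n}" by auto
  ultimately show ?thesis
    using assms by (simp add: card_image)
qed

theorem proposition5:
  "\<forall>\<rho> \<in> {sn, lcs_min, scs_max, lcs_max :: nat graph \<Rightarrow> nat}. \<forall>N::real. N > 0 \<longrightarrow>
     (\<exists>G H :: nat graph. simple_graph G \<and> simple_graph H \<and> proper_subgraph H G \<and>
        chi H = chi G \<and> real (\<rho> H) > N * real (\<rho> G))"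
proof (intro ballI allI impI)
  fix \<rho> :: "nat graph \<Rightarrow> nat" and N :: real
  assume \<rho>: "\<rho> \<in> {sn, lcs_min, scs_max, lcs_max}" and "N > 0"
  define n where "n = nat \<lceil>N\<rceil> + 2"
  have n: "n \<ge> 2" "real n > N" unfolding n_def by linarith+
  let ?G = "star n" and ?H = "single_edge_graph n"
  have G: "simple_graph ?G" and H: "simple_graph ?H"
    using simple_graph_star simple_graph_single_edge_graph n by auto
  have e: "{0, 1} \<in> edges ?G" "{0, 1} \<in> edges ?H"
    using n by (auto simp: edges_star)
  have "\<rho> ?G = 1"
    using bipartite_parameter_eq_card_components[OF G proper_colouring_star e(1) \<rho>]
    by (simp add: components_star)
  moreover have "\<rho> ?H = n"
    using bipartite_parameter_eq_card_components[OF H proper_colouring_single_edge_graph e(2) \<rho>]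
      card_components_single_edge_graph n by simp
  moreover have "chi ?H = chi ?G"
    using chi_eq_2[OF G proper_colouring_star e(1)]
      chi_eq_2[OF H proper_colouring_single_edge_graph e(2)] by simp
  ultimately show "\<exists>G H :: nat graph. simple_graph G \<and> simple_graph H \<and> proper_subgraph H G \<and>
      chi H = chi G \<and> real (\<rho> H) > N * real (\<rho> G)"
    using G H proper_subgraph_single_edge_graph_star n by (intro exI[of _ ?G] exI[of _ ?H]) simp
qed

end
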